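(* Let $G=(V,E)$ be an undirected graph (parallel edges allowed) with reactances $r_e>0$ and admittance matrix $\mathbf{A}$, let $\vec{\theta}\in\mathbb{R}^V$ and $\vec{p}=\mathbf{A}\vec{\theta}$. Let $H=(V_H,E_H)$ be a subgraph of $G$, $F\subseteq E_H$, $\mathbf{A}'$ the admittance matrix of $(V,E\setminus F)$, and $\vec{\theta}'\in\mathbb{R}^V$ with $\mathbf{A}'\vec{\theta}'=\vec{p}$. If $S$ is a subgraph of $G$ with node set $V_S\supseteq V_H$, then $\mathbf{A}_{\bar S|G}(\vec{\theta}-\vec{\theta}')=0$, where $\mathbf{A}_{\bar S|G}$ is the submatrix of $\mathbf{A}$ consisting of the rows indexed by $V\setminus V_S$ (and all columns).
   Context: Admittance matrix: for $u\neq v$, $a_{uv}=-\sum_e 1/r_e$ over edges $e$ joining $u,v$ ($0$ if none), $a_{uu}=-\sum_{w\neq u}a_{uw}$. *)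

theory Defs
  imports Complex_Main
begin

text \<open>Undirected multigraphs: a finite vertex set V, a finite set E of edge
identifiers (so parallel edges are allowed), and an endpoint map
ends e = (x, y), the edge being undirected.\<close>

definition multigraph :: "'v set \<Rightarrow> 'e set \<Rightarrow> ('e \<Rightarrow> 'v \<times> 'v) \<Rightarrow> bool" where
  "multigraph V E ends \<longleftrightarrow> finite V \<and> finite E \<and>
     (\<forall>e\<in>E. fst (ends e) \<in> V \<and> snd (ends e) \<in> V)"

definition joins :: "('e \<Rightarrow> 'v \<times> 'v) \<Rightarrow> 'e \<Rightarrow> 'v \<Rightarrow> 'v \<Rightarrow> bool" where
  "joins ends e u v \<longleftrightarrow> ends e = (u, v) \<or> ends e = (v, u)"

definition subgraph :: "'v set \<Rightarrow> 'e set \<Rightarrow> 'v set \<Rightarrow> 'e set \<Rightarrow> ('e \<Rightarrow> 'v \<times> 'v) \<Rightarrow> bool" where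
  "subgraph VH EH V E ends \<longleftrightarrow> VH \<subseteq> V \<and> EH \<subseteq> E \<and>
     (\<forall>e\<in>EH. fst (ends e) \<in> VH \<and> snd (ends e) \<in> VH)"

definition offdiag_adm :: "'e set \<Rightarrow> ('e \<Rightarrow> 'v \<times> 'v) \<Rightarrow> ('e \<Rightarrow> real) \<Rightarrow> 'v \<Rightarrow> 'v \<Rightarrow> real" where
  "offdiag_adm E ends r u v = - (\<Sum>e\<in>{e\<in>E. joins ends e u v}. 1 / r e)"

definition admittance :: "'v set \<Rightarrow> 'e set \<Rightarrow> ('e \<Rightarrow> 'v \<times> 'v) \<Rightarrow> ('e \<Rightarrow> real) \<Rightarrow> 'v \<Rightarrow> 'v \<Rightarrow> real" where
  "admittance V E ends r u v =
     (if u \<noteq> v then offdiag_adm E ends r u v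
      else - (\<Sum>w\<in>V - {u}. offdiag_adm E ends r u w))"

definition mat_vec :: "'v set \<Rightarrow> ('v \<Rightarrow> 'v \<Rightarrow> real) \<Rightarrow> ('v \<Rightarrow> real) \<Rightarrow> 'v \<Rightarrow> real" where
  "mat_vec V A x u = (\<Sum>w\<in>V. A u w * x w)"

end

theory Submission
  imports Defs
begin

text \<open>Every removed edge has both endpoints in V_H, hence none is incident to a node
outside V_S. So for u \<notin> V_S the u-th rows of A and A' coincide, and
(A(\<theta> - \<theta>'))_u = (A\<theta>)_u - (A'\<theta>')_u = p_u - p_u = 0.\<close>

lemma offdiag_adm_Diff_nonincident:
  assumes "\<forall>e\<in>F. u \<noteq> fst (ends e) \<and> u \<noteq> snd (ends e)"
  shows "offdiag_adm (E - F) ends r u = offdiag_adm E ends r u"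
proof
  fix w
  have "{e\<in>E - F. joins ends e u w} = {e\<in>E. joins ends e u w}"
    using assms unfolding joins_def by (auto simp: prod_eq_iff)
  then show "offdiag_adm (E - F) ends r u w = offdiag_adm E ends r u w"
    unfolding offdiag_adm_def by simp
qed

lemma admittance_row_Diff_nonincident:
  assumes "\<forall>e\<in>F. u \<noteq> fst (ends e) \<and> u \<noteq> snd (ends e)"
  shows "admittance V (E - F) ends r u = admittance V E ends r u"
  using offdiag_adm_Diff_nonincident[OF assms] unfolding admittance_def by (simp add: fun_eq_iff)

lemma mat_vec_diff:
  "mat_vec V A (\<lambda>w. x w - y w) u = mat_vec V A x u - mat_vec V A y u"
  unfolding mat_vec_def by (simp add: right_diff_distrib sum_subtractf)

theorem lemma5p11:
  fixes V VH VS :: "'v set" and E EH ES F :: "'e set"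
    and ends :: "'e \<Rightarrow> 'v \<times> 'v" and r :: "'e \<Rightarrow> real"
    and \<theta> \<theta>' p :: "'v \<Rightarrow> real"
  assumes G: "multigraph V E ends"
    and r_pos: "\<forall>e\<in>E. r e > 0"
    and p_def: "\<forall>u\<in>V. p u = mat_vec V (admittance V E ends r) \<theta> u"
    and H: "subgraph VH EH V E ends"
    and F: "F \<subseteq> EH"
    and \<theta>': "\<forall>u\<in>V. mat_vec V (admittance V (E - F) ends r) \<theta>' u = p u"
    and S: "subgraph VS ES V E ends"
    and VHS: "VH \<subseteq> VS"
  shows "\<forall>u\<in>V - VS. mat_vec V (admittance V E ends r) (\<lambda>w. \<theta> w - \<theta>' w) u = 0"
proof
  fix u assume u: "u \<in> V - VS"
  have "\<forall>e\<in>F. u \<noteq> fst (ends e) \<and> u \<noteq> snd (ends e)"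
    using H F VHS u unfolding subgraph_def by blast
  then have same_row: "admittance V (E - F) ends r u = admittance V E ends r u"
    by (rule admittance_row_Diff_nonincident)
  have "mat_vec V (admittance V E ends r) (\<lambda>w. \<theta> w - \<theta>' w) u
      = mat_vec V (admittance V E ends r) \<theta> u - mat_vec V (admittance V (E - F) ends r) \<theta>' u"
    unfolding mat_vec_diff by (simp add: mat_vec_def same_row)
  also have "\<dots> = 0" using p_def \<theta>' u by auto
  finally show "mat_vec V (admittance V E ends r) (\<lambda>w. \<theta> w - \<theta>' w) u = 0" .
qed

end
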